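(* Let $m\ge2$, $n\ge0$, $0\le k\le n$, input $\rho=|\vec n_0\rangle\langle\vec n_0|$ with $N_0=N(\vec n_0)$. For $\vec\alpha\in\mathbb C^m$ and $g\in\mathrm{SU}(m)$, the heterodyne filter function $$f_{\lambda_k}(\vec\alpha,g):=\frac{1}{s_{\lambda_k}}\langle\vec\alpha|\,\tau^m(g)\,[P_{\lambda_k}(\rho)]\,\tau^m(g)^\dagger\,|\vec\alpha\rangle$$ is given by $$f_{\lambda_k}(\vec\alpha,g)=\frac{(-1)^{\varphi(N_0)}}{s_{\lambda_k}}\sum_{M\in\mathrm{GT}(\lambda_k)}C^{M}_{N_0,\bar N_0}\sum_{N'\in\mathrm{GT}(\tau_n^m)}(-1)^{\varphi(N')}C^{M}_{N',\bar N'}\,\big|\langle\vec\alpha|\tau_n^m(g)|\vec n'\rangle\big|^2,$$ where $|\vec n'\rangle=|N'\rangle$ and $s_{\lambda_k}$ is the heterodyne frame-operator eigenvalue.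
   Context: Fix integers $m\ge 2$, $n\ge0$. $\mathcal H_n^m$ is the span of Fock states $|\vec n\rangle=|n_1,\dots,n_m\rangle$, $\vec n\in\mathbb N^m$, $\sum_in_i=n$. $\tau^m$ denotes the unitary action of $\mathrm{SU}(m)$ by passive transformations on the full $m$-mode Fock space, whose restriction to $\mathcal H_n^m$ is the totally symmetric irrep $\tau_n^m$; $\bar\tau_n^m$ is its complex conjugate in the Fock basis; $\omega_n^m(g)(X)=\tau_n^m(g)X\tau_n^m(g)^\dagger\cong\tau_n^m\otimes\bar\tau_n^m$. $\lambda_k$ is the irrep with Young diagram $(2k,k,\dots,k,0)$ (first row $2k$ boxes, rows $2,\dots,m-1$ with $k$ boxes, empty last row), $d_{\lambda_k}$ its dimension; $\tau_n^m\otimes\bar\tau_n^m\cong\bigoplus_{k=0}^n\lambda_k$ multiplicity-free, and $P_{\lambda_k}$ is the orthogonal (Hilbert–Schmidt) projector onto the $\lambda_k$ component of $\mathcal B(\mathcal H_n^m)$. Gelfand–Tsetlin (GT) patterns: for an irrep $\lambda=(\lambda_1,\dots,\lambda_m)$, $\lambda_m=0$, a GT pattern $M=(M_{i,j})_{1\le i\le j\le m}$ has $M_{i,m}=\lambda_i$ and $M_{i,j+1}\ge M_{i,j}\ge M_{i+1,j+1}$; $\mathrm{GT}(\lambda)$ is the set of such patterns and $\{|M\rangle\}$ the orthonormal GT basis (Condon–Shortley convention). The Fock state $|\vec n\rangle$ is identified with the GT basis vector $|N\rangle$ of $\tau_n^m$ with $N_{1,j}=n_1+\dots+n_j$, $N_{i,j}=0$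 for $i\ge2$; write $N=N(\vec n)$. The dual pattern is $\bar M_{i,l}:=M_{1,m}-M_{l-i+1,l}$. With $s_M(k)=\sum_{j=1}^k\sum_{i=1}^jM_{i,j}$ and $M_{\max}$ the highest-weight pattern, $\varphi(M):=s_M(m-1)-s_{M_{\max}}(m-1)\in\mathbb Z$, so that $|N\rangle=(-1)^{\varphi(N)}|\bar N\rangle$ when the Fock vector is regarded as a basis vector of $\bar\tau_n^m$. Real Clebsch–Gordan coefficients: $C^M_{N_1,\bar N_2}:=\langle N_1,\bar N_2|M\rangle$ for $N_1,N_2\in\mathrm{GT}(\tau_n^m)$, $M\in\mathrm{GT}(\lambda_k)$, with $|N_1\rangle\otimes|\bar N_2\rangle=\sum_k\sum_{M\in\mathrm{GT}(\lambda_k)}C^M_{N_1,\bar N_2}|M\rangle$. Coherent states: for $\vec\alpha\in\mathbb C^m$, $|\vec\alpha\rangle=e^{-|\vec\alpha|^2/2}\sum_{\vec n\in\mathbb N^m}\frac{\vec\alpha^{\vec n}}{\sqrt{\vec n!}}|\vec n\rangle$. Heterodyne frame-operator eigenvalue: $s_{\lambda_k}:=d_{\lambda_k}^{-1}\int_{\mathbb C^m}d^2\vec\alpha\,\langle\vec\alpha|P_{\lambda_k}(|\vec\alpha\rangle\langle\vec\alpha|)|\vec\alpha\rangle$ (with $P_{\lambda_k}$ applied after compressing to $\mathcal H_n^m$), assumed nonzero. *)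

theory Defs
  imports "HOL-Analysis.Analysis" "HOL-Library.Function_Algebras"
begin

(* Fock states: occupation-number functions; modes are indexed 0..m-1 (paper: 1..m) *)
type_synonym fock = "nat \<Rightarrow> nat"
(* operators on H_n^m as matrices in the Fock basis (zero outside H_n^m) *)
type_synonym fop = "fock \<Rightarrow> fock \<Rightarrow> complex"
(* Gelfand-Tsetlin patterns M i j, 1 <= i <= j <= m, zero elsewhere *)
type_synonym gtp = "nat \<Rightarrow> nat \<Rightarrow> nat"

definition fock_states :: "nat \<Rightarrow> nat \<Rightarrow> fock set" where
  "fock_states m n = {v. (\<forall>i. m \<le> i \<longrightarrow> v i = 0) \<and> (\<Sum>i<m. v i) = n}"

definition is_op :: "nat \<Rightarrow> nat \<Rightarrow> fop \<Rightarrow> bool" where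
  "is_op m n X \<longleftrightarrow> (\<forall>p q. X p q \<noteq> 0 \<longrightarrow> p \<in> fock_states m n \<and> q \<in> fock_states m n)"

definition opmult :: "nat \<Rightarrow> nat \<Rightarrow> fop \<Rightarrow> fop \<Rightarrow> fop" where
  "opmult m n A B = (\<lambda>p q. if p \<in> fock_states m n \<and> q \<in> fock_states m n
      then (\<Sum>r\<in>fock_states m n. A p r * B r q) else 0)"

definition adjoint :: "fop \<Rightarrow> fop" where
  "adjoint X = (\<lambda>p q. cnj (X q p))"

definition hs_inner :: "nat \<Rightarrow> nat \<Rightarrow> fop \<Rightarrow> fop \<Rightarrow> complex" where
  "hs_inner m n X Y = (\<Sum>p\<in>fock_states m n. \<Sum>q\<in>fock_states m n. cnj (X p q) * Y p q)"

(* the operator a_i^dagger a_j restricted to H_n^m (generator of the gl(m) action) *)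
definition ladder :: "nat \<Rightarrow> nat \<Rightarrow> nat \<Rightarrow> nat \<Rightarrow> fop" where
  "ladder m n i j = (\<lambda>p q. if p \<in> fock_states m n \<and> q \<in> fock_states m n then
      (if i = j then (if p = q then of_nat (q i) else 0)
       else if 0 < q j \<and> p = (q(j := q j - 1))(i := q i + 1)
         then complex_of_real (sqrt (real (q j * (q i + 1)))) else 0)
      else 0)"

(* derivative of omega_n^m: X \<mapsto> [a_i^dagger a_j, X] *)
definition ad :: "nat \<Rightarrow> nat \<Rightarrow> nat \<Rightarrow> nat \<Rightarrow> fop \<Rightarrow> fop" where
  "ad m n i j X = (\<lambda>p q. opmult m n (ladder m n i j) X p q - opmult m n X (ladder m n i j) p q)"

(* highest-weight vectors of weight nu for gl(l) acting on the first l modes *)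
definition hw_vectors :: "nat \<Rightarrow> nat \<Rightarrow> nat \<Rightarrow> (nat \<Rightarrow> int) \<Rightarrow> fop set" where
  "hw_vectors m n l nu = {X. is_op m n X
      \<and> (\<forall>i<l. ad m n i i X = (\<lambda>p q. of_int (nu i) * X p q))
      \<and> (\<forall>i j. i < j \<and> j < l \<longrightarrow> ad m n i j X = (\<lambda>p q. 0))}"

inductive_set gen_module :: "nat \<Rightarrow> nat \<Rightarrow> nat \<Rightarrow> fop set \<Rightarrow> fop set"
  for m n l S where
  gen_base: "X \<in> S \<Longrightarrow> X \<in> gen_module m n l S"
| gen_zero: "(\<lambda>p q. 0) \<in> gen_module m n l S"
| gen_add: "X \<in> gen_module m n l S \<Longrightarrow> Y \<in> gen_module m n l S \<Longrightarrow>
     (\<lambda>p q. X p q + Y p q) \<in> gen_module m n l S"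
| gen_scale: "X \<in> gen_module m n l S \<Longrightarrow> (\<lambda>p q. c * X p q) \<in> gen_module m n l S"
| gen_ad: "X \<in> gen_module m n l S \<Longrightarrow> i < l \<Longrightarrow> j < l \<Longrightarrow>
     ad m n i j X \<in> gen_module m n l S"

(* gl(m)-weight of the irrep lambda_k = (2k,k,...,k,0) inside tau (x) conj tau,
   i.e. (2k,k,...,k,0) - (k,...,k) = (k,0,...,0,-k) *)
definition lam_weight :: "nat \<Rightarrow> nat \<Rightarrow> nat \<Rightarrow> int" where
  "lam_weight m k = (\<lambda>i. if i = 0 then int k else if i = m - 1 then - int k else 0)"

definition component :: "nat \<Rightarrow> nat \<Rightarrow> nat \<Rightarrow> fop set" where
  "component m n k = gen_module m n m (hw_vectors m n m (lam_weight m k))"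

definition hs_proj :: "nat \<Rightarrow> nat \<Rightarrow> fop set \<Rightarrow> fop \<Rightarrow> fop" where
  "hs_proj m n W X = (THE Y. Y \<in> W \<and> (\<forall>Z\<in>W. hs_inner m n Z (\<lambda>p q. X p q - Y p q) = 0))"

definition P_lam :: "nat \<Rightarrow> nat \<Rightarrow> nat \<Rightarrow> fop \<Rightarrow> fop" where
  "P_lam m n k X = hs_proj m n (component m n k) X"

definition d_lam :: "nat \<Rightarrow> nat \<Rightarrow> nat \<Rightarrow> nat" where
  "d_lam m n k = vector_space.dim (\<lambda>(c::complex) (X::fop). \<lambda>p q. c * X p q) (component m n k)"

definition gt_patterns :: "nat \<Rightarrow> (nat \<Rightarrow> nat) \<Rightarrow> gtp set" where
  "gt_patterns m lam = {M.
      (\<forall>i j. \<not> (1 \<le> i \<and> i \<le> j \<and> j \<le> m) \<longrightarrow> M i j = 0)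
    \<and> (\<forall>i. 1 \<le> i \<and> i \<le> m \<longrightarrow> M i m = lam i)
    \<and> (\<forall>i j. 1 \<le> i \<and> i \<le> j \<and> j < m \<longrightarrow> M i j \<le> M i (j + 1) \<and> M (i + 1) (j + 1) \<le> M i j)}"

definition lambda_k :: "nat \<Rightarrow> nat \<Rightarrow> nat \<Rightarrow> nat" where
  "lambda_k m k = (\<lambda>i. if i = 1 then 2 * k else if 1 < i \<and> i < m then k else 0)"

definition tau_diag :: "nat \<Rightarrow> nat \<Rightarrow> nat" where
  "tau_diag n = (\<lambda>i. if i = 1 then n else 0)"

definition gt_max :: "nat \<Rightarrow> (nat \<Rightarrow> nat) \<Rightarrow> gtp" where
  "gt_max m lam = (\<lambda>i j. if 1 \<le> i \<and> i \<le> j \<and> j \<le> m then lam i else 0)"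

definition gt_s :: "gtp \<Rightarrow> nat \<Rightarrow> int" where
  "gt_s M kk = (\<Sum>j = 1..kk. \<Sum>i = 1..j. int (M i j))"

definition gt_phi :: "nat \<Rightarrow> (nat \<Rightarrow> nat) \<Rightarrow> gtp \<Rightarrow> int" where
  "gt_phi m lam M = gt_s M (m - 1) - gt_s (gt_max m lam) (m - 1)"

definition sgn_pow :: "int \<Rightarrow> complex" where
  "sgn_pow z = (if even z then 1 else -1)"

definition gt_of_fock :: "nat \<Rightarrow> fock \<Rightarrow> gtp" where
  "gt_of_fock m v = (\<lambda>i j. if i = 1 \<and> 1 \<le> j \<and> j \<le> m then (\<Sum>t<j. v t) else 0)"

definition fock_of_gt :: "nat \<Rightarrow> gtp \<Rightarrow> fock" where
  "fock_of_gt m N = (\<lambda>t. if t < m then N 1 (t + 1) - N 1 t else 0)"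

(* C^M_{N1, bar N2} = <N1, bar N2 | M>, where |N1> (x) |bar N2> corresponds to
   (-1)^phi(N2) |n1><n2| in B(H_n^m) and e M is the basis vector |M> *)
definition CG :: "nat \<Rightarrow> nat \<Rightarrow> (gtp \<Rightarrow> fop) \<Rightarrow> gtp \<Rightarrow> gtp \<Rightarrow> gtp \<Rightarrow> complex" where
  "CG m n e M N1 N2 = sgn_pow (gt_phi m (tau_diag n) N2) * e M (fock_of_gt m N1) (fock_of_gt m N2)"

definition gt_basis :: "nat \<Rightarrow> nat \<Rightarrow> nat \<Rightarrow> (gtp \<Rightarrow> fop) \<Rightarrow> bool" where
  "gt_basis m n k e \<longleftrightarrow>
     (\<forall>M\<in>gt_patterns m (lambda_k m k). e M \<in> component m n k
        \<and> (\<forall>l. 1 \<le> l \<and> l < m \<longrightarrow>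
             e M \<in> gen_module m n l (hw_vectors m n l (\<lambda>i. int (M (i + 1) l) - int k))))
   \<and> (\<forall>M\<in>gt_patterns m (lambda_k m k). \<forall>M'\<in>gt_patterns m (lambda_k m k).
        hs_inner m n (e M) (e M') = (if M = M' then 1 else 0))
   \<and> (\<forall>X\<in>component m n k.
        X = (\<lambda>p q. \<Sum>M\<in>gt_patterns m (lambda_k m k). hs_inner m n (e M) X * e M p q))
   \<and> (\<forall>M\<in>gt_patterns m (lambda_k m k). \<forall>N1\<in>gt_patterns m (tau_diag n).
        \<forall>N2\<in>gt_patterns m (tau_diag n). CG m n e M N1 N2 \<in> \<real>)"

(* SU(m) as m x m complex matrices (indices 0..m-1) *)
definition mat_det :: "nat \<Rightarrow> (nat \<Rightarrow> nat \<Rightarrow> complex) \<Rightarrow> complex" where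
  "mat_det m g = (\<Sum>p | p permutes {..<m}. of_int (sign p) * (\<Prod>i<m. g i (p i)))"

definition SU :: "nat \<Rightarrow> (nat \<Rightarrow> nat \<Rightarrow> complex) set" where
  "SU m = {g. (\<forall>i<m. \<forall>j<m. (\<Sum>t<m. cnj (g t i) * g t j) = (if i = j then 1 else 0))
              \<and> mat_det m g = 1}"

definition fock_fact :: "nat \<Rightarrow> fock \<Rightarrow> real" where
  "fock_fact m v = (\<Prod>i<m. fact (v i))"

(* mode of the s-th particle of the Fock state q (particles listed mode by mode) *)
definition slot_mode :: "fock \<Rightarrow> nat \<Rightarrow> nat" where
  "slot_mode q s = (LEAST i. s < (\<Sum>t\<le>i. q t))"

(* tau_n^m(g): passive transformation a_i^dagger \<mapsto> \<Sum>_j g_{ji} a_j^dagger, matrix elements <p|tau(g)|q> *)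
definition tau_mat :: "nat \<Rightarrow> nat \<Rightarrow> (nat \<Rightarrow> nat \<Rightarrow> complex) \<Rightarrow> fop" where
  "tau_mat m n g = (\<lambda>p q. if p \<in> fock_states m n \<and> q \<in> fock_states m n then
      (\<Sum>f\<in>{f\<in>{..<n} \<rightarrow>\<^sub>E {..<m}. \<forall>i<m. card {s\<in>{..<n}. f s = i} = p i}.
          \<Prod>s<n. g (f s) (slot_mode q s))
      * complex_of_real (sqrt (fock_fact m p) / sqrt (fock_fact m q))
    else 0)"

(* Fock coefficients <p|alpha> of the coherent state |alpha> *)
definition coh :: "nat \<Rightarrow> (nat \<Rightarrow> complex) \<Rightarrow> fock \<Rightarrow> complex" where
  "coh m \<alpha> p = complex_of_real (exp (- (\<Sum>i<m. (cmod (\<alpha> i))\<^sup>2) / 2))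
      * (\<Prod>i<m. \<alpha> i ^ p i) / complex_of_real (sqrt (fock_fact m p))"

(* <alpha| X |alpha> for X in B(H_n^m) (regarded as an operator on the full Fock space,
   zero outside H_n^m) *)
definition coh_expval :: "nat \<Rightarrow> nat \<Rightarrow> (nat \<Rightarrow> complex) \<Rightarrow> fop \<Rightarrow> complex" where
  "coh_expval m n \<alpha> X = (\<Sum>p\<in>fock_states m n. \<Sum>q\<in>fock_states m n. cnj (coh m \<alpha> p) * X p q * coh m \<alpha> q)"

(* |alpha><alpha| compressed to H_n^m *)
definition coh_proj :: "nat \<Rightarrow> nat \<Rightarrow> (nat \<Rightarrow> complex) \<Rightarrow> fop" where
  "coh_proj m n \<alpha> = (\<lambda>p q. if p \<in> fock_states m n \<and> q \<in> fock_states m n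
      then coh m \<alpha> p * cnj (coh m \<alpha> q) else 0)"

(* heterodyne frame-operator eigenvalue s_{lambda_k}; d^2 alpha = Lebesgue measure on C^m *)
definition s_lam :: "nat \<Rightarrow> nat \<Rightarrow> nat \<Rightarrow> complex" where
  "s_lam m n k = (1 / of_nat (d_lam m n k)) *
     (LINT \<alpha> | PiM {..<m} (\<lambda>_. (lborel :: complex measure)).
        coh_expval m n \<alpha> (P_lam m n k (coh_proj m n \<alpha>)))"

definition fock_proj :: "fock \<Rightarrow> fop" where
  "fock_proj v = (\<lambda>p q. if p = v \<and> q = v then 1 else 0)"

definition filter_fn :: "nat \<Rightarrow> nat \<Rightarrow> nat \<Rightarrow> fock \<Rightarrow> (nat \<Rightarrow> complex) \<Rightarrow> (nat \<Rightarrow> nat \<Rightarrow> complex) \<Rightarrow> complex" where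
  "filter_fn m n k n0 \<alpha> g = (1 / s_lam m n k) *
     coh_expval m n \<alpha> (opmult m n (opmult m n (tau_mat m n g) (P_lam m n k (fock_proj n0)))
                                    (adjoint (tau_mat m n g)))"

definition coh_tau_amp :: "nat \<Rightarrow> nat \<Rightarrow> (nat \<Rightarrow> complex) \<Rightarrow> (nat \<Rightarrow> nat \<Rightarrow> complex) \<Rightarrow> fock \<Rightarrow> complex" where
  "coh_tau_amp m n \<alpha> g v = (\<Sum>p\<in>fock_states m n. cnj (coh m \<alpha> p) * tau_mat m n g p v)"

end

theory Submission
  imports Defs
begin

text \<open>
  The projector \<open>P_lam m n k\<close> is the expansion in the orthonormal basis \<open>e\<close>, so
  \<open>P_lam (|n\<^sub>0\<rangle>\<langle>n\<^sub>0|) = \<Sum>\<^sub>M conj (e M n\<^sub>0 n\<^sub>0) e M\<close>.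
  Each \<open>e M\<close> is a weight vector for all the Gelfand--Tsetlin subalgebras \<open>gl(l)\<close>, which forces
  \<open>e M p q \<noteq> 0\<close> to fix the difference of the partial sums of \<open>p\<close> and \<open>q\<close>; if moreover
  \<open>e M n\<^sub>0 n\<^sub>0 \<noteq> 0\<close> that difference is zero, so \<open>e M\<close> is diagonal in the Fock basis.
  Conjugating by \<open>\<tau>(g)\<close> and taking the coherent-state expectation therefore leaves only the
  diagonal terms \<open>e M n' n' |\<langle>\<alpha>|\<tau>(g)|n'\<rangle>|\<^sup>2\<close>; the diagonal entries are real, and rewriting them as
  Clebsch--Gordan coefficients only introduces the signs \<open>(-1)\<^sup>\<phi>\<close>.
\<close>

lemma finite_fock_states: "finite (fock_states m n)"
proof -
  let ?B = "{f. \<forall>x. (x \<in> {..<m} \<longrightarrow> f x \<in> {..n}) \<and> (x \<notin> {..<m} \<longrightarrow> f x = 0)}"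
  have "fock_states m n \<subseteq> ?B"
  proof
    fix v assume v: "v \<in> fock_states m n"
    then have "v x \<le> n" if "x < m" for x
      using member_le_sum[of x "{..<m}" v] that by (auto simp: fock_states_def)
    then show "v \<in> ?B" using v by (auto simp: fock_states_def)
  qed
  moreover have "finite ?B" by (rule finite_set_of_finite_funs) auto
  ultimately show ?thesis by (rule finite_subset)
qed

lemma fock_states_eqI:
  assumes "p \<in> fock_states m n" "q \<in> fock_states m n"
    and partial: "\<And>l. 1 \<le> l \<Longrightarrow> l < m \<Longrightarrow> (\<Sum>t<l. p t) = (\<Sum>t<l. q t)"
  shows "p = q"
proof
  have sums: "(\<Sum>t<l. p t) = (\<Sum>t<l. q t)" if "l \<le> m" for l
    using that partial[of l] assms(1,2) by (cases "l = 0 \<or> l = m") (auto simp: fock_states_def)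
  fix t show "p t = q t"
  proof (cases "t < m")
    case True
    then show ?thesis using sums[of t] sums[of "Suc t"] by simp
  next
    case False
    then show ?thesis using assms(1,2) by (auto simp: fock_states_def)
  qed
qed

lemma ad_diag_apply:
  assumes "p \<in> fock_states m n" "q \<in> fock_states m n"
  shows "ad m n i i X p q = (of_nat (p i) - of_nat (q i)) * X p q"
proof -
  have "opmult m n (ladder m n i i) X p q = (\<Sum>r\<in>fock_states m n. if p = r then of_nat (p i) * X p q else 0)"
       "opmult m n X (ladder m n i i) p q = (\<Sum>r\<in>fock_states m n. if q = r then X p q * of_nat (q i) else 0)"
    unfolding opmult_def using assms by (auto intro!: sum.cong simp: ladder_def)
  then show ?thesis
    using assms finite_fock_states by (simp add: ad_def algebra_simps)
qed

lemma ladder_preserves_partial_sum: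
  assumes "ladder m n i j p r \<noteq> 0" "i < l" "j < l"
  shows "(\<Sum>t<l. p t) = (\<Sum>t<l. r t)"
proof (cases "i = j")
  case True
  then show ?thesis using assms by (auto simp: ladder_def split: if_splits)
next
  case False
  then have r: "0 < r j" and p: "p = (r(j := r j - 1))(i := r i + 1)"
    using assms by (auto simp: ladder_def split: if_splits)
  have "p t + (if t = j then 1 else 0) = r t + (if t = i then 1 else 0)" for t
    using r False unfolding p by auto
  then have "(\<Sum>t<l. p t + (if t = j then 1 else 0)) = (\<Sum>t<l. r t + (if t = i then 1 else 0))"
    by simp
  then show ?thesis using assms by (simp add: sum.distrib)
qed

text \<open>
  The Cartan generators act on a weight vector by its weight, and the ladder operators of \<open>gl(l)\<close>
  preserve the total occupation of the first \<open>l\<close> modes.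
\<close>
lemma gen_module_support_weight:
  assumes "X \<in> gen_module m n l S" "S \<subseteq> hw_vectors m n l \<nu>" "X p q \<noteq> 0"
  shows "p \<in> fock_states m n \<and> q \<in> fock_states m n \<and>
    int (\<Sum>t<l. p t) - int (\<Sum>t<l. q t) = (\<Sum>i<l. \<nu> i)"
  using assms(1,3)
proof (induction arbitrary: p q rule: gen_module.induct)
  case (gen_base X)
  then have hw: "X \<in> hw_vectors m n l \<nu>" using assms(2) by auto
  then have F: "p \<in> fock_states m n" "q \<in> fock_states m n"
    using gen_base by (auto simp: hw_vectors_def is_op_def)
  have "int (p i) - int (q i) = \<nu> i" if "i < l" for i
  proof -
    have "ad m n i i X p q = of_int (\<nu> i) * X p q"
      using hw that by (auto simp: hw_vectors_def)
    then have "(of_nat (p i) - of_nat (q i)) * X p q = of_int (\<nu> i) * X p q"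
      by (simp only: ad_diag_apply[OF F])
    then have "(of_int (int (p i) - int (q i)) :: complex) = of_int (\<nu> i)"
      using gen_base by simp
    then show ?thesis by (simp only: of_int_eq_iff)
  qed
  then show ?case using F by (simp add: sum_subtractf[symmetric])
next
  case (gen_ad X i j)
  let ?F = "fock_states m n"
  have F: "p \<in> ?F" "q \<in> ?F"
    using gen_ad.prems by (auto simp: ad_def opmult_def split: if_splits)
  then have "(\<Sum>r\<in>?F. ladder m n i j p r * X r q) \<noteq> 0 \<or> (\<Sum>r\<in>?F. X p r * ladder m n i j r q) \<noteq> 0"
    using gen_ad.prems by (auto simp: ad_def opmult_def)
  then show ?case
  proof
    assume "(\<Sum>r\<in>?F. ladder m n i j p r * X r q) \<noteq> 0"
    then obtain r where "ladder m n i j p r * X r q \<noteq> 0"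
      by (rule sum.not_neutral_contains_not_neutral)
    then have "ladder m n i j p r \<noteq> 0" "X r q \<noteq> 0" by auto
    from ladder_preserves_partial_sum[OF this(1) gen_ad.hyps(2,3)] gen_ad.IH[OF this(2)]
    show ?case using F by simp
  next
    assume "(\<Sum>r\<in>?F. X p r * ladder m n i j r q) \<noteq> 0"
    then obtain r where "X p r * ladder m n i j r q \<noteq> 0"
      by (rule sum.not_neutral_contains_not_neutral)
    then have "ladder m n i j r q \<noteq> 0" "X p r \<noteq> 0" by auto
    from ladder_preserves_partial_sum[OF this(1) gen_ad.hyps(2,3)] gen_ad.IH[OF this(2)]
    show ?case using F by simp
  qed
next
  case gen_zero
  then show ?case by simp
next
  case (gen_add X Y)
  then show ?case by (cases "X p q = 0") auto
next
  case (gen_scale X c)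
  then show ?case by (cases "X p q = 0") auto
qed

lemma gen_module_sum:
  assumes "finite A" "\<And>a. a \<in> A \<Longrightarrow> E a \<in> gen_module m n l S"
  shows "(\<lambda>p q. \<Sum>a\<in>A. c a * E a p q) \<in> gen_module m n l S"
  using assms
proof (induction A rule: finite_induct)
  case empty
  then show ?case using gen_zero by simp
next
  case (insert x A)
  then show ?case
    using gen_add[OF gen_scale[of "E x" m n l S "c x"], of "\<lambda>p q. \<Sum>a\<in>A. c a * E a p q"] by simp
qed

lemma gt_patterns_le_top_row:
  assumes M: "M \<in> gt_patterns m lam" and "1 \<le> i" "i \<le> j" "j \<le> m"
  shows "M i j \<le> lam i"
  using assms(4,3)
proof (induction j rule: inc_induct)
  case base
  then show ?case using M \<open>1 \<le> i\<close> by (auto simp: gt_patterns_def)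
next
  case (step j)
  then have "M i j \<le> M i (Suc j)" using M \<open>1 \<le> i\<close> by (auto simp: gt_patterns_def)
  then show ?case using step by simp
qed

lemma finite_gt_patterns: "finite (gt_patterns m lam)"
proof -
  define B where "B = Max (lam ` {..m})"
  define G where "G = {f::nat\<Rightarrow>nat. \<forall>j. (j \<in> {..m} \<longrightarrow> f j \<in> {..B}) \<and> (j \<notin> {..m} \<longrightarrow> f j = 0)}"
  let ?P = "{M. \<forall>i. (i \<in> {..m} \<longrightarrow> M i \<in> G) \<and> (i \<notin> {..m} \<longrightarrow> M i = (\<lambda>_. 0))}"
  have "finite G" unfolding G_def by (rule finite_set_of_finite_funs) auto
  then have "finite ?P" by (intro finite_set_of_finite_funs) auto
  moreover have "gt_patterns m lam \<subseteq> ?P"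
  proof
    fix M assume M: "M \<in> gt_patterns m lam"
    have zero: "M i j = 0" if "\<not> (1 \<le> i \<and> i \<le> j \<and> j \<le> m)" for i j
      using M that by (auto simp: gt_patterns_def)
    have "M i j \<le> B" if "1 \<le> i \<and> i \<le> j \<and> j \<le> m" for i j
    proof -
      have "M i j \<le> lam i" using gt_patterns_le_top_row[OF M] that by auto
      also have "lam i \<le> B" unfolding B_def using that by (intro Max_ge) auto
      finally show ?thesis .
    qed
    then show "M \<in> ?P" using zero by (auto simp: G_def) (metis zero_le)
  qed
  ultimately show ?thesis by (rule finite_subset[rotated])
qed

text \<open>A pattern of \<open>(n, 0, \<dots>, 0)\<close> is determined by its first row, the partial sums of a Fock state.\<close>

lemma gt_patterns_tau_lower_rows:
  assumes "N \<in> gt_patterns m (tau_diag n)" "2 \<le> i"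
  shows "N i j = 0"
  using assms gt_patterns_le_top_row[OF assms(1), of i j]
  by (cases "1 \<le> i \<and> i \<le> j \<and> j \<le> m") (auto simp: gt_patterns_def tau_diag_def)

lemma sum_fock_of_gt:
  assumes "N \<in> gt_patterns m (tau_diag n)" "j \<le> m"
  shows "(\<Sum>t<j. fock_of_gt m N t) = N 1 j"
  using assms(2)
proof (induction j)
  case 0
  then show ?case using assms(1) by (auto simp: gt_patterns_def)
next
  case (Suc j)
  have "N 1 j \<le> N 1 (Suc j)"
    using assms(1) Suc.prems by (cases "j = 0") (auto simp: gt_patterns_def)
  then show ?case using Suc by (simp add: fock_of_gt_def)
qed

lemma fock_of_gt_of_fock:
  "v \<in> fock_states m n \<Longrightarrow> fock_of_gt m (gt_of_fock m v) = v"
  by (rule ext) (auto simp: fock_of_gt_def gt_of_fock_def fock_states_def)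

lemma gt_of_fock_in_gt_patterns:
  assumes "v \<in> fock_states m n"
  shows "gt_of_fock m v \<in> gt_patterns m (tau_diag n)"
proof -
  have "(\<Sum>t<j. v t) \<le> (\<Sum>t<Suc j. v t)" for j by simp
  then show ?thesis
    using assms unfolding gt_patterns_def gt_of_fock_def tau_diag_def fock_states_def by auto
qed

lemma bij_betw_fock_of_gt:
  assumes "1 \<le> m"
  shows "bij_betw (fock_of_gt m) (gt_patterns m (tau_diag n)) (fock_states m n)"
proof (rule bij_betw_byWitness[where f' = "gt_of_fock m"])
  show "\<forall>N\<in>gt_patterns m (tau_diag n). gt_of_fock m (fock_of_gt m N) = N"
  proof (intro ballI ext)
    fix N i j assume N: "N \<in> gt_patterns m (tau_diag n)"
    show "gt_of_fock m (fock_of_gt m N) i j = N i j"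
    proof (cases "i = 1 \<and> 1 \<le> j \<and> j \<le> m")
      case True
      then show ?thesis using sum_fock_of_gt[OF N] by (simp add: gt_of_fock_def)
    next
      case False
      then have "gt_of_fock m (fock_of_gt m N) i j = 0"
        unfolding gt_of_fock_def by (rule if_not_P)
      moreover have "N i j = 0"
        using gt_patterns_tau_lower_rows[OF N] N False by (cases "2 \<le> i") (auto simp: gt_patterns_def)
      ultimately show ?thesis by simp
    qed
  qed
  show "\<forall>v\<in>fock_states m n. fock_of_gt m (gt_of_fock m v) = v"
    by (simp add: fock_of_gt_of_fock)
  show "fock_of_gt m ` gt_patterns m (tau_diag n) \<subseteq> fock_states m n"
  proof
    fix v assume "v \<in> fock_of_gt m ` gt_patterns m (tau_diag n)"
    then obtain N where N: "N \<in> gt_patterns m (tau_diag n)" and v: "v = fock_of_gt m N" by blast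
    have "(\<Sum>t<m. v t) = n"
      using sum_fock_of_gt[OF N, of m] N assms by (auto simp: v gt_patterns_def tau_diag_def)
    then show "v \<in> fock_states m n" by (auto simp: fock_states_def v fock_of_gt_def)
  qed
  show "gt_of_fock m ` fock_states m n \<subseteq> gt_patterns m (tau_diag n)"
    using gt_of_fock_in_gt_patterns by blast
qed

lemma hs_inner_sum_right:
  "hs_inner m n Z (\<lambda>p q. \<Sum>i\<in>I. c i * E i p q) = (\<Sum>i\<in>I. c i * hs_inner m n Z (E i))"
  unfolding hs_inner_def
  by (simp add: sum_distrib_left sum_distrib_right mult.left_commute sum.swap[of _ I])

lemma hs_inner_sum_left:
  "hs_inner m n (\<lambda>p q. \<Sum>i\<in>I. c i * E i p q) Y = (\<Sum>i\<in>I. cnj (c i) * hs_inner m n (E i) Y)"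
  unfolding hs_inner_def
  by (simp add: cnj_sum sum_distrib_left sum_distrib_right mult.assoc sum.swap[of _ I])

lemma hs_inner_diff_right:
  "hs_inner m n Z (\<lambda>p q. X p q - Y p q) = hs_inner m n Z X - hs_inner m n Z Y"
  unfolding hs_inner_def by (simp add: algebra_simps sum_subtractf)

lemma hs_proj_eq_expansion:
  assumes I: "finite I"
    and basis: "\<And>i. i \<in> I \<Longrightarrow> e i \<in> W"
    and orthonormal: "\<And>i j. i \<in> I \<Longrightarrow> j \<in> I \<Longrightarrow> hs_inner m n (e i) (e j) = (if i = j then 1 else 0)"
    and expansion: "\<And>Y. Y \<in> W \<Longrightarrow> Y = (\<lambda>p q. \<Sum>i\<in>I. hs_inner m n (e i) Y * e i p q)"
    and closed: "\<And>c. (\<lambda>p q. \<Sum>i\<in>I. c i * e i p q) \<in> W"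
  shows "hs_proj m n W X = (\<lambda>p q. \<Sum>i\<in>I. hs_inner m n (e i) X * e i p q)"
    (is "_ = ?Y0")
proof -
  have coeff_Y0: "hs_inner m n (e j) ?Y0 = hs_inner m n (e j) X" if "j \<in> I" for j
  proof -
    have "hs_inner m n (e j) ?Y0 = (\<Sum>i\<in>I. hs_inner m n (e i) X * hs_inner m n (e j) (e i))"
      by (rule hs_inner_sum_right)
    also have "\<dots> = (\<Sum>i\<in>I. if j = i then hs_inner m n (e j) X else 0)"
      using that orthonormal by (intro sum.cong) auto
    finally show ?thesis using that I by simp
  qed
  show ?thesis
    unfolding hs_proj_def
  proof (rule the_equality)
    have "hs_inner m n Z (\<lambda>p q. X p q - ?Y0 p q) = 0" if "Z \<in> W" for Z
    proof -
      have "hs_inner m n Z (\<lambda>p q. X p q - ?Y0 p q)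
          = hs_inner m n (\<lambda>p q. \<Sum>i\<in>I. hs_inner m n (e i) Z * e i p q) (\<lambda>p q. X p q - ?Y0 p q)"
        by (rule arg_cong[where f = "\<lambda>Z. hs_inner m n Z (\<lambda>p q. X p q - ?Y0 p q)", OF expansion[OF that]])
      also have "\<dots> = (\<Sum>i\<in>I. cnj (hs_inner m n (e i) Z) * hs_inner m n (e i) (\<lambda>p q. X p q - ?Y0 p q))"
        by (rule hs_inner_sum_left)
      also have "\<dots> = 0" by (simp add: hs_inner_diff_right coeff_Y0)
      finally show ?thesis .
    qed
    then show "?Y0 \<in> W \<and> (\<forall>Z\<in>W. hs_inner m n Z (\<lambda>p q. X p q - ?Y0 p q) = 0)"
      using closed[of "\<lambda>i. hs_inner m n (e i) X"] by blast
  next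
    fix Y assume Y: "Y \<in> W \<and> (\<forall>Z\<in>W. hs_inner m n Z (\<lambda>p q. X p q - Y p q) = 0)"
    then have coeff_Y: "hs_inner m n (e i) Y = hs_inner m n (e i) X" if "i \<in> I" for i
      using basis[OF that] by (auto simp: hs_inner_diff_right)
    have "Y = (\<lambda>p q. \<Sum>i\<in>I. hs_inner m n (e i) Y * e i p q)"
      using Y by (intro expansion) blast
    also have "\<dots> = ?Y0"
      by (intro ext sum.cong refl) (simp add: coeff_Y)
    finally show "Y = ?Y0" .
  qed
qed

lemma hs_inner_fock_proj:
  assumes "v \<in> fock_states m n"
  shows "hs_inner m n Z (fock_proj v) = cnj (Z v v)"
proof -
  have "hs_inner m n Z (fock_proj v)
      = (\<Sum>p\<in>fock_states m n. \<Sum>q\<in>fock_states m n. if q = v then (if p = v then cnj (Z v v) else 0) else 0)"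
    unfolding hs_inner_def fock_proj_def by (intro sum.cong) auto
  then show ?thesis using assms finite_fock_states by simp
qed

lemma gt_basis_in_component:
  "gt_basis m n k e \<Longrightarrow> M \<in> gt_patterns m (lambda_k m k) \<Longrightarrow> e M \<in> component m n k"
  unfolding gt_basis_def by blast

lemma gt_basis_in_gen_module:
  "gt_basis m n k e \<Longrightarrow> M \<in> gt_patterns m (lambda_k m k) \<Longrightarrow> 1 \<le> l \<Longrightarrow> l < m \<Longrightarrow>
    e M \<in> gen_module m n l (hw_vectors m n l (\<lambda>i. int (M (i + 1) l) - int k))"
  unfolding gt_basis_def by blast

lemma gt_basis_CG_real:
  "gt_basis m n k e \<Longrightarrow> M \<in> gt_patterns m (lambda_k m k) \<Longrightarrow>
    N1 \<in> gt_patterns m (tau_diag n) \<Longrightarrow> N2 \<in> gt_patterns m (tau_diag n) \<Longrightarrow> CG m n e M N1 N2 \<in> \<real>"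
  unfolding gt_basis_def by blast

lemma P_lam_eq_expansion:
  assumes gb: "gt_basis m n k e"
  shows "P_lam m n k X = (\<lambda>p q. \<Sum>M\<in>gt_patterns m (lambda_k m k). hs_inner m n (e M) X * e M p q)"
  unfolding P_lam_def
proof (rule hs_proj_eq_expansion[OF finite_gt_patterns gt_basis_in_component[OF gb]])
  show "(\<lambda>p q. \<Sum>M\<in>gt_patterns m (lambda_k m k). c M * e M p q) \<in> component m n k" for c
    using gt_basis_in_component[OF gb] unfolding component_def
    by (intro gen_module_sum finite_gt_patterns) auto
qed (use gb in \<open>auto simp: gt_basis_def\<close>)

lemma gt_basis_diagonal:
  assumes gb: "gt_basis m n k e" and M: "M \<in> gt_patterns m (lambda_k m k)"
    and "e M v v \<noteq> 0" "e M p q \<noteq> 0"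
  shows "p = q"
proof -
  have "e M \<in> gen_module m n m (hw_vectors m n m (lam_weight m k))"
    using gt_basis_in_component[OF gb M] by (simp add: component_def)
  from gen_module_support_weight[of "e M" m n m _ "lam_weight m k", OF this order_refl assms(4)]
  have F: "p \<in> fock_states m n" "q \<in> fock_states m n" by simp_all
  show ?thesis
  proof (rule fock_states_eqI[OF F])
    fix l assume "1 \<le> l" "l < m"
    then have gen: "e M \<in> gen_module m n l (hw_vectors m n l (\<lambda>i. int (M (i + 1) l) - int k))"
      by (rule gt_basis_in_gen_module[OF gb M])
    note weight = gen_module_support_weight[of "e M" m n l _ "\<lambda>i. int (M (i + 1) l) - int k", OF gen order_refl]
    have "int (\<Sum>t<l. p t) - int (\<Sum>t<l. q t) = int (\<Sum>t<l. v t) - int (\<Sum>t<l. v t)"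
      using weight[OF assms(4)] weight[OF assms(3)] by simp
    then show "(\<Sum>t<l. p t) = (\<Sum>t<l. q t)" by linarith
  qed
qed

lemma sgn_pow_mult_self: "sgn_pow z * sgn_pow z = 1"
  by (simp add: sgn_pow_def)

lemma CG_gt_of_fock:
  "v \<in> fock_states m n \<Longrightarrow>
    CG m n e M (gt_of_fock m v) (gt_of_fock m v) = sgn_pow (gt_phi m (tau_diag n) (gt_of_fock m v)) * e M v v"
  by (simp add: CG_def fock_of_gt_of_fock)

lemma gt_basis_diag_real:
  assumes gb: "gt_basis m n k e" and M: "M \<in> gt_patterns m (lambda_k m k)" and v: "v \<in> fock_states m n"
  shows "cnj (e M v v) = e M v v"
proof -
  let ?sg = "sgn_pow (gt_phi m (tau_diag n) (gt_of_fock m v))"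
  have "?sg * CG m n e M (gt_of_fock m v) (gt_of_fock m v) \<in> \<real>"
    using gt_basis_CG_real[OF gb M gt_of_fock_in_gt_patterns[OF v] gt_of_fock_in_gt_patterns[OF v]]
    by (simp add: sgn_pow_def)
  also have "?sg * CG m n e M (gt_of_fock m v) (gt_of_fock m v) = e M v v"
    by (simp add: CG_gt_of_fock[OF v] mult.assoc[symmetric] sgn_pow_mult_self)
  finally show ?thesis by (simp add: Reals_cnj_iff)
qed

lemma sum_gt_patterns_CG_diag:
  assumes "1 \<le> m"
  shows "(\<Sum>N\<in>gt_patterns m (tau_diag n). sgn_pow (gt_phi m (tau_diag n) N) * CG m n e M N N * h (fock_of_gt m N))
    = (\<Sum>v\<in>fock_states m n. e M v v * h v)"
proof -
  have "(\<Sum>N\<in>gt_patterns m (tau_diag n). sgn_pow (gt_phi m (tau_diag n) N) * CG m n e M N N * h (fock_of_gt m N))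
      = (\<Sum>N\<in>gt_patterns m (tau_diag n). e M (fock_of_gt m N) (fock_of_gt m N) * h (fock_of_gt m N))"
    unfolding CG_def by (intro sum.cong refl) (simp add: mult.assoc[symmetric] sgn_pow_mult_self)
  also have "\<dots> = (\<Sum>v\<in>fock_states m n. e M v v * h v)"
    by (rule sum.reindex_bij_betw[OF bij_betw_fock_of_gt[OF assms]])
  finally show ?thesis .
qed

lemma sum_opmult_left:
  assumes "q \<in> fock_states m n"
  shows "(\<Sum>p\<in>fock_states m n. u p * opmult m n A B p q)
    = (\<Sum>r\<in>fock_states m n. (\<Sum>p\<in>fock_states m n. u p * A p r) * B r q)"
proof -
  let ?F = "fock_states m n"
  have "(\<Sum>p\<in>?F. u p * opmult m n A B p q) = (\<Sum>p\<in>?F. \<Sum>r\<in>?F. u p * A p r * B r q)"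
    using assms by (intro sum.cong refl) (simp add: opmult_def sum_distrib_left mult.assoc)
  also have "\<dots> = (\<Sum>r\<in>?F. (\<Sum>p\<in>?F. u p * A p r) * B r q)"
    by (subst sum.swap) (simp add: sum_distrib_right)
  finally show ?thesis .
qed

lemma coh_expval_conj:
  fixes m n :: nat and \<alpha> :: "nat \<Rightarrow> complex" and T Y :: fop
  defines "a \<equiv> \<lambda>v. \<Sum>p\<in>fock_states m n. cnj (coh m \<alpha> p) * T p v"
  shows "coh_expval m n \<alpha> (opmult m n (opmult m n T Y) (adjoint T))
    = (\<Sum>s\<in>fock_states m n. \<Sum>r\<in>fock_states m n. a s * Y s r * cnj (a r))"
proof -
  let ?F = "fock_states m n"
  let ?c = "coh m \<alpha>"
  have "coh_expval m n \<alpha> (opmult m n (opmult m n T Y) (adjoint T))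
      = (\<Sum>q\<in>?F. (\<Sum>p\<in>?F. cnj (?c p) * opmult m n (opmult m n T Y) (adjoint T) p q) * ?c q)"
    unfolding coh_expval_def by (subst sum.swap) (simp add: sum_distrib_right)
  also have "\<dots> = (\<Sum>q\<in>?F. \<Sum>r\<in>?F. (\<Sum>s\<in>?F. a s * Y s r) * cnj (T q r) * ?c q)"
    by (intro sum.cong refl)
       (simp add: sum_opmult_left a_def adjoint_def sum_distrib_right cong: sum.cong)
  also have "\<dots> = (\<Sum>r\<in>?F. (\<Sum>s\<in>?F. a s * Y s r) * (\<Sum>q\<in>?F. cnj (T q r) * ?c q))"
    by (subst sum.swap) (simp add: sum_distrib_left mult.assoc)
  also have "\<dots> = (\<Sum>r\<in>?F. (\<Sum>s\<in>?F. a s * Y s r) * cnj (a r))"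
    by (simp add: a_def cnj_sum mult.commute)
  also have "\<dots> = (\<Sum>s\<in>?F. \<Sum>r\<in>?F. a s * Y s r * cnj (a r))"
    by (subst sum.swap) (simp add: sum_distrib_right)
  finally show ?thesis .
qed

lemma sum_sandwich_diagonal:
  assumes "finite F" and diagonal: "\<And>s r. s \<in> F \<Longrightarrow> r \<in> F \<Longrightarrow> Y s r \<noteq> 0 \<Longrightarrow> s = r"
  shows "(\<Sum>s\<in>F. \<Sum>r\<in>F. a s * Y s r * cnj (a r)) = (\<Sum>s\<in>F. Y s s * complex_of_real ((cmod (a s))\<^sup>2))"
proof (rule sum.cong[OF refl])
  fix s assume s: "s \<in> F"
  have "(\<Sum>r\<in>F. a s * Y s r * cnj (a r)) = (\<Sum>r\<in>F. if s = r then a s * Y s s * cnj (a s) else 0)"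
    using diagonal[OF s] by (intro sum.cong) auto
  also have "\<dots> = Y s s * complex_of_real ((cmod (a s))\<^sup>2)"
    using s assms(1) by (simp add: complex_norm_square mult_ac del: of_real_power)
  finally show "(\<Sum>r\<in>F. a s * Y s r * cnj (a r)) = Y s s * complex_of_real ((cmod (a s))\<^sup>2)" .
qed

lemma sum_sandwich_linear:
  fixes c :: "'i \<Rightarrow> 'a::comm_semiring_0"
  shows "(\<Sum>s\<in>F. \<Sum>r\<in>F. a s * (\<Sum>i\<in>I. c i * E i s r) * b r) = (\<Sum>i\<in>I. c i * (\<Sum>s\<in>F. \<Sum>r\<in>F. a s * E i s r * b r))"
proof -
  have "(\<Sum>s\<in>F. \<Sum>r\<in>F. a s * (\<Sum>i\<in>I. c i * E i s r) * b r)
      = (\<Sum>s\<in>F. \<Sum>r\<in>F. \<Sum>i\<in>I. c i * (a s * E i s r * b r))"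
    by (intro sum.cong refl) (simp add: sum_distrib_left sum_distrib_right mult_ac)
  also have "\<dots> = (\<Sum>i\<in>I. \<Sum>s\<in>F. \<Sum>r\<in>F. c i * (a s * E i s r * b r))"
    by (subst sum.swap, subst (2) sum.swap) simp
  also have "\<dots> = (\<Sum>i\<in>I. c i * (\<Sum>s\<in>F. \<Sum>r\<in>F. a s * E i s r * b r))"
    by (simp add: sum_distrib_left)
  finally show ?thesis .
qed

lemma gt_basis_sandwich_eq_CG:
  assumes gb: "gt_basis m n k e" and M: "M \<in> gt_patterns m (lambda_k m k)"
    and v: "v \<in> fock_states m n" and "1 \<le> m"
  shows "cnj (e M v v) * (\<Sum>s\<in>fock_states m n. \<Sum>r\<in>fock_states m n. a s * e M s r * cnj (a r))
    = sgn_pow (gt_phi m (tau_diag n) (gt_of_fock m v)) * CG m n e M (gt_of_fock m v) (gt_of_fock m v) *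
      (\<Sum>N\<in>gt_patterns m (tau_diag n). sgn_pow (gt_phi m (tau_diag n) N) * CG m n e M N N *
         complex_of_real ((cmod (a (fock_of_gt m N)))\<^sup>2))"
proof (cases "e M v v = 0")
  case True
  then show ?thesis by (simp add: CG_gt_of_fock[OF v])
next
  case False
  let ?sg = "sgn_pow (gt_phi m (tau_diag n) (gt_of_fock m v))"
  let ?S = "\<Sum>s\<in>fock_states m n. e M s s * complex_of_real ((cmod (a s))\<^sup>2)"
  have "(\<Sum>s\<in>fock_states m n. \<Sum>r\<in>fock_states m n. a s * e M s r * cnj (a r)) = ?S"
    by (rule sum_sandwich_diagonal[OF finite_fock_states]) (rule gt_basis_diagonal[of m n k e M v, OF gb M False])
  then have "cnj (e M v v) * (\<Sum>s\<in>fock_states m n. \<Sum>r\<in>fock_states m n. a s * e M s r * cnj (a r))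
      = (?sg * ?sg) * e M v v * ?S"
    by (simp only: gt_basis_diag_real[OF gb M v] sgn_pow_mult_self mult_1_left)
  also have "\<dots> = ?sg * CG m n e M (gt_of_fock m v) (gt_of_fock m v) * ?S"
    by (simp only: CG_gt_of_fock[OF v] mult.assoc)
  also have "\<dots> = ?sg * CG m n e M (gt_of_fock m v) (gt_of_fock m v) *
      (\<Sum>N\<in>gt_patterns m (tau_diag n). sgn_pow (gt_phi m (tau_diag n) N) * CG m n e M N N *
         complex_of_real ((cmod (a (fock_of_gt m N)))\<^sup>2))"
    by (simp only: sum_gt_patterns_CG_diag[OF \<open>1 \<le> m\<close>, where h = "\<lambda>v. complex_of_real ((cmod (a v))\<^sup>2)"])
  finally show ?thesis .
qed

theorem mainTheorem13:
  fixes m n k :: nat and n0 :: fock and \<alpha> :: "nat \<Rightarrow> complex"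
    and g :: "nat \<Rightarrow> nat \<Rightarrow> complex" and e :: "gtp \<Rightarrow> fop"
  assumes "2 \<le> m" and "k \<le> n"
    and "n0 \<in> fock_states m n"
    and "g \<in> SU m"
    and "gt_basis m n k e"
    and "s_lam m n k \<noteq> 0"
  shows "filter_fn m n k n0 \<alpha> g =
     sgn_pow (gt_phi m (tau_diag n) (gt_of_fock m n0)) / s_lam m n k *
     (\<Sum>M\<in>gt_patterns m (lambda_k m k).
        CG m n e M (gt_of_fock m n0) (gt_of_fock m n0) *
        (\<Sum>N'\<in>gt_patterns m (tau_diag n).
           sgn_pow (gt_phi m (tau_diag n) N') * CG m n e M N' N' *
           complex_of_real ((cmod (coh_tau_amp m n \<alpha> g (fock_of_gt m N')))\<^sup>2)))"
proof -
  let ?F = "fock_states m n"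
  let ?a = "coh_tau_amp m n \<alpha> g"
  have gb: "gt_basis m n k e" and n0: "n0 \<in> ?F" and "1 \<le> m" using assms by simp_all
  have "P_lam m n k (fock_proj n0) = (\<lambda>s r. \<Sum>M\<in>gt_patterns m (lambda_k m k). cnj (e M n0 n0) * e M s r)"
    by (simp add: P_lam_eq_expansion[OF gb] hs_inner_fock_proj[OF n0])
  then have "filter_fn m n k n0 \<alpha> g = 1 / s_lam m n k *
      (\<Sum>M\<in>gt_patterns m (lambda_k m k).
         cnj (e M n0 n0) * (\<Sum>s\<in>?F. \<Sum>r\<in>?F. ?a s * e M s r * cnj (?a r)))"
    unfolding filter_fn_def coh_expval_conj coh_tau_amp_def[symmetric] by (simp add: sum_sandwich_linear)
  also have "\<dots> = 1 / s_lam m n k *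
      (\<Sum>M\<in>gt_patterns m (lambda_k m k). sgn_pow (gt_phi m (tau_diag n) (gt_of_fock m n0)) *
         (CG m n e M (gt_of_fock m n0) (gt_of_fock m n0) *
          (\<Sum>N'\<in>gt_patterns m (tau_diag n). sgn_pow (gt_phi m (tau_diag n) N') * CG m n e M N' N' *
             complex_of_real ((cmod (?a (fock_of_gt m N')))\<^sup>2))))"
    using gt_basis_sandwich_eq_CG[OF gb _ n0 \<open>1 \<le> m\<close>] by (simp add: mult.assoc cong: sum.cong)
  finally show ?thesis by (simp add: sum_distrib_left)
qed

end
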